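(* Let $(\mathcal M,g)$ be an $n$-dimensional Lorentzian manifold ($n\ge3$) with a concircularly semi-symmetric metric connection $\overset{1}{\nabla}$ whose associated vector field $P$ satisfies $g(P,P)=-1$. Then $(\mathcal M,g,\overset{1}{\nabla})$ is an Einstein type manifold of the fourth kind (i.e. $\overset{4}{Ric}=\frac{\overset{4}{r}}{n}g$) if and only if it is a perfect fluid space-time whose Ricci tensor is $\overset{g}{Ric}=(n-1)(2g+\pi\otimes\pi)$; in that case the scalar curvature is constant, $\overset{g}{r}=(n-1)(2n-1)$.
   Context: Let $(\mathcal M,g)$ be an $n$-dimensional pseudo-Riemannian manifold with Levi-Civita connection $\overset{g}{\nabla}$, let $P$ be a vector field and $\pi=g(\cdot,P)$ its associated 1-form. The semi-symmetric metric connection generated by $\pi$ is $\overset{1}{\nabla}_XY=\overset{g}{\nabla}_XY+\pi(Y)X-g(X,Y)P$; it satisfies $\overset{1}{\nabla}g=0$ and has torsion $\overset{1}{T}(X,Y)=\pi(Y)X-\pi(X)Y$. It is called a concircularly semi-symmetric metric connection if there is a smooth function $\omega$ on $\mathcal M$ such that $(\overset{g}{\nabla}_X\pi)(Y)-\pi(X)\pi(Y)=\omega\, g(X,Y)$ for all vector fields $X,Y$. Curvature tensors: $\overset{1}{R}(X,Y)Z=\overset{1}{\nabla}_X\overset{1}{\nabla}_YZ-\overset{1}{\nabla}_Y\overset{1}{\nabla}_XZ-\overset{1}{\nabla}_{[X,Y]}Z$ and $\overset{4}{R}(X,Y)Z=\overset{1}{R}(X,Y)Z+(\overset{1}{\nabla}_Y\overset{1}{T})(X,Z)-\overset{1}{T}(\overset{1}{T}(X,Y),Z)$.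 The Ricci tensors are $\overset{\theta}{Ric}(Y,Z)=\mathrm{tr}(X\mapsto \overset{\theta}{R}(X,Y)Z)$, and $\overset{g}{Ric}$ is the Ricci tensor of $\overset{g}{\nabla}$ defined the same way; $\overset{\theta}{r}$ and $\overset{g}{r}$ are their $g$-traces. A Lorentzian manifold is a perfect fluid space-time if $\overset{g}{Ric}=ag+b\,\pi\otimes\pi$ for scalar functions $a,b$. *)

theory Defs
  imports "HOL-Analysis.Analysis"
begin

text \<open>The manifold is represented by an open
chart domain U in real^'n (dimension n = CARD('n)); tensors are given by their
components in the coordinate frame (partial derivatives along the coordinate axes).
All conditions in the theorem are pointwise/local, so this is a chart-wise rendering.\<close>

definition pd :: "'n::finite \<Rightarrow> (real^'n \<Rightarrow> real) \<Rightarrow> real^'n \<Rightarrow> real" where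
  "pd i f x = frechet_derivative f (at x) (axis i 1)"

fun iter_pd :: "'n::finite list \<Rightarrow> (real^'n \<Rightarrow> real) \<Rightarrow> real^'n \<Rightarrow> real" where
  "iter_pd [] f = f"
| "iter_pd (i # is) f = pd i (iter_pd is f)"

definition smooth_on :: "(real^'n::finite) set \<Rightarrow> (real^'n \<Rightarrow> real) \<Rightarrow> bool" where
  "smooth_on U f \<longleftrightarrow> (\<forall>is. iter_pd is f differentiable_on U)"

text \<open>Lorentzian signature (-,+,...,+) of a symmetric bilinear form (Sylvester).\<close>
definition lorentzian_matrix :: "real^('n::finite)^'n \<Rightarrow> bool" where
  "lorentzian_matrix G \<longleftrightarrow> transpose G = G \<and>
     (\<exists>(E::real^'n^'n) i0. invertible E \<and>
        transpose E ** G ** E = (\<chi> i j. if i = j then (if i = i0 then -1 else 1) else 0))"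

definition lorentzian_metric :: "(real^'n::finite) set \<Rightarrow> (real^'n \<Rightarrow> real^'n^'n) \<Rightarrow> bool" where
  "lorentzian_metric U g \<longleftrightarrow> open U \<and>
     (\<forall>i j. smooth_on U (\<lambda>x. g x $ i $ j)) \<and> (\<forall>x\<in>U. lorentzian_matrix (g x))"

definition ginv :: "(real^'n \<Rightarrow> real^'n^'n) \<Rightarrow> real^'n \<Rightarrow> real^'n^'n" where
  "ginv g x = matrix_inv (g x)"

text \<open>Christoffel symbols of the Levi-Civita connection:
  christoffel g k i j x = Gamma^k_{ij}, i.e. nabla_{d_i} d_j = sum_k Gamma^k_{ij} d_k.\<close>
definition christoffel :: "(real^'n::finite \<Rightarrow> real^'n^'n) \<Rightarrow> 'n \<Rightarrow> 'n \<Rightarrow> 'n \<Rightarrow> real^'n \<Rightarrow> real" where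
  "christoffel g k i j x = (1/2) * (\<Sum>l\<in>UNIV. ginv g x $ k $ l *
      (pd i (\<lambda>y. g y $ j $ l) x + pd j (\<lambda>y. g y $ i $ l) x - pd l (\<lambda>y. g y $ i $ j) x))"

definition pi_form :: "(real^'n::finite \<Rightarrow> real^'n^'n) \<Rightarrow> (real^'n \<Rightarrow> real^'n) \<Rightarrow> 'n \<Rightarrow> real^'n \<Rightarrow> real" where
  "pi_form g P j x = (\<Sum>k\<in>UNIV. g x $ j $ k * P x $ k)"

definition kdelta :: "'n \<Rightarrow> 'n \<Rightarrow> real" where
  "kdelta i j = (if i = j then 1 else 0)"

text \<open>Semi-symmetric metric connection nabla^1: coefficients A^k_{ij} with
  nabla1_X Y = nabla^g_X Y + pi(Y) X - g(X,Y) P.\<close>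
definition conn1 :: "(real^'n::finite \<Rightarrow> real^'n^'n) \<Rightarrow> (real^'n \<Rightarrow> real^'n) \<Rightarrow> 'n \<Rightarrow> 'n \<Rightarrow> 'n \<Rightarrow> real^'n \<Rightarrow> real" where
  "conn1 g P k i j x = christoffel g k i j x + pi_form g P j x * kdelta k i - g x $ i $ j * P x $ k"

text \<open>Curvature of a connection with coefficients A (A k i j = A^k_{ij}):
  curv A a b c m x = m-th component of R(d_a,d_b) d_c.\<close>
definition curv :: "('n::finite \<Rightarrow> 'n \<Rightarrow> 'n \<Rightarrow> real^'n \<Rightarrow> real) \<Rightarrow> 'n \<Rightarrow> 'n \<Rightarrow> 'n \<Rightarrow> 'n \<Rightarrow> real^'n \<Rightarrow> real" where
  "curv A a b c m x =
     pd a (A m b c) x + (\<Sum>p\<in>UNIV. A p b c x * A m a p x)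
   - pd b (A m a c) x - (\<Sum>p\<in>UNIV. A p a c x * A m b p x)"

text \<open>Torsion of nabla^1: T(X,Y) = pi(Y) X - pi(X) Y; torsion1 g P m a b x = T^m_{ab}.\<close>
definition torsion1 :: "(real^'n::finite \<Rightarrow> real^'n^'n) \<Rightarrow> (real^'n \<Rightarrow> real^'n) \<Rightarrow> 'n \<Rightarrow> 'n \<Rightarrow> 'n \<Rightarrow> real^'n \<Rightarrow> real" where
  "torsion1 g P m a b x = pi_form g P b x * kdelta m a - pi_form g P a x * kdelta m b"

text \<open>(nabla^1_{d_b} T)(d_a, d_c), m-th component.\<close>
definition nabla1_torsion :: "(real^'n::finite \<Rightarrow> real^'n^'n) \<Rightarrow> (real^'n \<Rightarrow> real^'n) \<Rightarrow> 'n \<Rightarrow> 'n \<Rightarrow> 'n \<Rightarrow> 'n \<Rightarrow> real^'n \<Rightarrow> real" where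
  "nabla1_torsion g P b m a c x =
     pd b (torsion1 g P m a c) x
   + (\<Sum>p\<in>UNIV. conn1 g P m b p x * torsion1 g P p a c x)
   - (\<Sum>p\<in>UNIV. conn1 g P p b a x * torsion1 g P m p c x)
   - (\<Sum>p\<in>UNIV. conn1 g P p b c x * torsion1 g P m a p x)"

definition curv1 where "curv1 g P a b c m x = curv (conn1 g P) a b c m x"

definition curv4 where
  "curv4 g P a b c m x = curv1 g P a b c m x + nabla1_torsion g P b m a c x
     - (\<Sum>p\<in>UNIV. torsion1 g P p a b x * torsion1 g P m p c x)"

definition curvg where "curvg g a b c m x = curv (christoffel g) a b c m x"

definition ricci_of :: "('n::finite \<Rightarrow> 'n \<Rightarrow> 'n \<Rightarrow> 'n \<Rightarrow> real^'n \<Rightarrow> real) \<Rightarrow> 'n \<Rightarrow> 'n \<Rightarrow> real^'n \<Rightarrow> real" where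
  "ricci_of R b c x = (\<Sum>a\<in>UNIV. R a b c a x)"

definition scalar_of :: "(real^'n::finite \<Rightarrow> real^'n^'n) \<Rightarrow> ('n \<Rightarrow> 'n \<Rightarrow> real^'n \<Rightarrow> real) \<Rightarrow> real^'n \<Rightarrow> real" where
  "scalar_of g Ric x = (\<Sum>b\<in>UNIV. \<Sum>c\<in>UNIV. ginv g x $ b $ c * Ric b c x)"

definition Ric4 where "Ric4 g P = ricci_of (curv4 g P)"
definition r4 where "r4 g P = scalar_of g (Ric4 g P)"
definition Ricg where "Ricg g = ricci_of (curvg g)"
definition rg where "rg g = scalar_of g (Ricg g)"

definition concircular :: "(real^'n::finite) set \<Rightarrow> (real^'n \<Rightarrow> real^'n^'n) \<Rightarrow> (real^'n \<Rightarrow> real^'n) \<Rightarrow> bool" where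
  "concircular U g P \<longleftrightarrow> (\<exists>\<omega>. smooth_on U \<omega> \<and> (\<forall>x\<in>U. \<forall>a b.
      pd a (pi_form g P b) x - (\<Sum>p\<in>UNIV. christoffel g p a b x * pi_form g P p x)
      - pi_form g P a x * pi_form g P b x = \<omega> x * g x $ a $ b))"

definition einstein_type_4 :: "(real^'n::finite) set \<Rightarrow> (real^'n \<Rightarrow> real^'n^'n) \<Rightarrow> (real^'n \<Rightarrow> real^'n) \<Rightarrow> bool" where
  "einstein_type_4 U g P \<longleftrightarrow>
     (\<forall>x\<in>U. \<forall>a b. Ric4 g P a b x = r4 g P x / real CARD('n) * g x $ a $ b)"

definition perfect_fluid :: "(real^'n::finite) set \<Rightarrow> (real^'n \<Rightarrow> real^'n^'n) \<Rightarrow> (real^'n \<Rightarrow> real^'n) \<Rightarrow> bool" where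
  "perfect_fluid U g P \<longleftrightarrow> (\<exists>\<alpha> \<beta>. \<forall>x\<in>U. \<forall>a b.
      Ricg g a b x = \<alpha> x * g x $ a $ b + \<beta> x * pi_form g P a x * pi_form g P b x)"

end

theory Submission
  imports Defs
begin

text \<open>Differentiating g(P,P) = -1 gives g(\<nabla>P, P) = 0, and contracting the concircularity
equation with P then forces \<omega> = 1, i.e. \<nabla>\<pi> = g + \<pi>\<otimes>\<pi> and \<nabla>P = Id + \<pi>\<otimes>P. Consequently
the torsion of \<nabla>^1 is parallel, R^1(X,Y)Z = R(X,Y)Z + g(X,Z)Y - g(Y,Z)X, and
Ric^4 = Ric - (n-1)(g + \<pi>\<otimes>\<pi>). The Ricci identity for \<nabla>P gives R(X,Y)P = \<pi>(Y)X - \<pi>(X)Y,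
hence Ric(\<cdot>,P) = (n-1)\<pi>. If Ric^4 = (r^4/n) g, then Ric = \<kappa> g + (n-1) \<pi>\<otimes>\<pi>, and contracting
with P gives \<kappa> = 2(n-1); conversely this Ricci tensor makes Ric^4 = (n-1) g. Tracing, with
g(P,P) = -1, gives r = (n-1)(2n-1).\<close>

lemma pd_eq:
  "(f has_derivative f') (at x) \<Longrightarrow> pd i f x = f' (axis i 1)"
  unfolding pd_def using frechet_derivative_at by metis

lemma pd_cong_on_open:
  assumes "open U" "x \<in> U" "\<And>y. y \<in> U \<Longrightarrow> f y = h y"
  shows "pd i f x = pd i h x"
proof -
  have "(f has_derivative D) (at x) \<longleftrightarrow> (h has_derivative D) (at x)" for D
    using has_derivative_transform_within_open[OF _ assms(1,2)] assms(3) by metis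
  then show ?thesis unfolding pd_def frechet_derivative_def by simp
qed

lemma pd_const [simp]: "pd i (\<lambda>y. c) x = 0"
  by (rule pd_eq) (auto intro!: derivative_eq_intros)

lemma pd_add:
  assumes "f differentiable at x" "h differentiable at x"
  shows "pd i (\<lambda>y. f y + h y) x = pd i f x + pd i h x"
  using pd_eq[OF has_derivative_add[OF assms[THEN frechet_derivative_works[THEN iffD1]]]]
  by (simp add: pd_def)

lemma pd_diff:
  assumes "f differentiable at x" "h differentiable at x"
  shows "pd i (\<lambda>y. f y - h y) x = pd i f x - pd i h x"
  using pd_eq[OF has_derivative_diff[OF assms[THEN frechet_derivative_works[THEN iffD1]]]]
  by (simp add: pd_def)

lemma pd_mult:
  assumes "f differentiable at x" "h differentiable at x"
  shows "pd i (\<lambda>y. f y * h y) x = pd i f x * h x + f x * pd i h x"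
  using pd_eq[OF has_derivative_mult[OF assms[THEN frechet_derivative_works[THEN iffD1]]]]
  by (simp add: pd_def)

lemma pd_mult_const: "f differentiable at x \<Longrightarrow> pd i (\<lambda>y. f y * c) x = pd i f x * c"
  using pd_mult[of f x "\<lambda>y. c" i] by simp

lemma pd_sum:
  assumes "finite S" "\<And>k. k \<in> S \<Longrightarrow> f k differentiable at x"
  shows "pd i (\<lambda>y. \<Sum>k\<in>S. f k y) x = (\<Sum>k\<in>S. pd i (f k) x)"
proof -
  have "((\<lambda>y. \<Sum>k\<in>S. f k y) has_derivative (\<lambda>h. \<Sum>k\<in>S. frechet_derivative (f k) (at x) h)) (at x)"
    using assms by (intro has_derivative_sum frechet_derivative_works[THEN iffD1]) auto
  from pd_eq[OF this] show ?thesis by (simp add: pd_def)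
qed

lemma smooth_on_iter_pd_differentiable:
  "smooth_on U f \<Longrightarrow> open U \<Longrightarrow> x \<in> U \<Longrightarrow> iter_pd is f differentiable at x"
  using differentiable_on_eq_differentiable_at unfolding smooth_on_def by blast

section \<open>Symmetry of second partial derivatives\<close>

lemma has_real_derivative_pd_axis:
  fixes f :: "real^'n::finite \<Rightarrow> real"
  assumes "f differentiable at (x + t *\<^sub>R axis i 1)"
  shows "((\<lambda>s. f (x + s *\<^sub>R axis i 1)) has_real_derivative pd i f (x + t *\<^sub>R axis i 1)) (at t)"
proof -
  let ?Df = "frechet_derivative f (at (x + t *\<^sub>R axis i 1))"
  have "((\<lambda>s. f (x + s *\<^sub>R axis i 1)) has_derivative (\<lambda>s. ?Df (s *\<^sub>R axis i 1))) (at t)"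
    using assms by (auto intro!: derivative_eq_intros has_derivative_compose[of _ _ _ _ f]
        frechet_derivative_works[THEN iffD1])
  moreover have "linear ?Df"
    using assms frechet_derivative_works has_derivative_linear by blast
  ultimately show ?thesis
    unfolding has_field_derivative_def pd_def by (simp add: linear_scale mult_commute_abs)
qed

definition second_difference :: "('a::real_vector \<Rightarrow> real) \<Rightarrow> 'a \<Rightarrow> 'a \<Rightarrow> 'a \<Rightarrow> real \<Rightarrow> real" where
  "second_difference f x u v h = f (x + h *\<^sub>R u + h *\<^sub>R v) - f (x + h *\<^sub>R u) - f (x + h *\<^sub>R v) + f x"

lemma second_difference_commute: "second_difference f x u v = second_difference f x v u"
  by (rule ext) (simp add: second_difference_def add_ac)

lemma second_difference_mean_value:
  fixes f :: "real^'n::finite \<Rightarrow> real"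
  assumes "0 < h" and differentiable: "\<And>y. norm (y - x) \<le> 2 * h \<Longrightarrow> f differentiable at y"
  obtains z where "0 < z" "z < h"
    "second_difference f x (axis i 1) (axis j 1) h
       = h * (pd i f (x + (h *\<^sub>R axis j 1 + z *\<^sub>R axis i 1)) - pd i f (x + z *\<^sub>R axis i 1))"
proof -
  let ?u = "axis i 1 :: real^'n" and ?v = "axis j 1 :: real^'n"
  define \<phi> where "\<phi> t = f (x + (h *\<^sub>R ?v + t *\<^sub>R ?u)) - f (x + t *\<^sub>R ?u)" for t
  have "(\<phi> has_real_derivative pd i f (x + h *\<^sub>R ?v + t *\<^sub>R ?u) - pd i f (x + t *\<^sub>R ?u)) (at t)"
    if "0 \<le> t" "t \<le> h" for t
  proof -
    have "norm (h *\<^sub>R ?v + t *\<^sub>R ?u) \<le> 2 * h"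
      using norm_triangle_ineq[of "h *\<^sub>R ?v" "t *\<^sub>R ?u"] that by (simp add: norm_axis_1)
    then have "f differentiable at (x + t *\<^sub>R ?u)" "f differentiable at (x + h *\<^sub>R ?v + t *\<^sub>R ?u)"
      using differentiable[of "x + t *\<^sub>R ?u"] differentiable[of "x + (h *\<^sub>R ?v + t *\<^sub>R ?u)"] that
      by (simp_all add: norm_axis_1 add.assoc)
    then show ?thesis
      unfolding \<phi>_def add.assoc[symmetric] by (intro DERIV_diff has_real_derivative_pd_axis)
  qed
  from MVT2[OF assms(1) this] obtain z where "0 < z" "z < h"
    "\<phi> h - \<phi> 0 = (h - 0) * (pd i f (x + h *\<^sub>R ?v + z *\<^sub>R ?u) - pd i f (x + z *\<^sub>R ?u))"
    by blast
  then show ?thesis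
    using that by (simp add: \<phi>_def second_difference_def add_ac)
qed

lemma second_difference_quotient_estimate:
  fixes f :: "real^'n::finite \<Rightarrow> real"
  assumes "0 < h" "linear D" "0 \<le> c"
    and differentiable: "\<And>y. norm (y - x) \<le> 2 * h \<Longrightarrow> f differentiable at y"
    and approx: "\<And>y. norm (y - x) \<le> 2 * h \<Longrightarrow> \<bar>pd i f y - pd i f x - D (y - x)\<bar> \<le> c * norm (y - x)"
  shows "\<bar>second_difference f x (axis i 1) (axis j 1) h / h\<^sup>2 - D (axis j 1)\<bar> \<le> 4 * c"
proof -
  let ?u = "axis i 1 :: real^'n" and ?v = "axis j 1 :: real^'n"
  obtain z where z: "0 < z" "z < h" and mvt: "second_difference f x ?u ?v h
      = h * (pd i f (x + (h *\<^sub>R ?v + z *\<^sub>R ?u)) - pd i f (x + z *\<^sub>R ?u))"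
    using second_difference_mean_value[OF assms(1) differentiable] by blast
  have "norm (h *\<^sub>R ?v + z *\<^sub>R ?u) \<le> 2 * h" "norm (z *\<^sub>R ?u) \<le> 2 * h"
    using norm_triangle_ineq[of "h *\<^sub>R ?v" "z *\<^sub>R ?u"] z by (simp_all add: norm_axis_1)
  then have "\<bar>pd i f (x + (h *\<^sub>R ?v + z *\<^sub>R ?u)) - pd i f x - D (h *\<^sub>R ?v + z *\<^sub>R ?u)\<bar> \<le> c * (2 * h)"
    "\<bar>pd i f (x + z *\<^sub>R ?u) - pd i f x - D (z *\<^sub>R ?u)\<bar> \<le> c * (2 * h)"
    using approx[of "x + (h *\<^sub>R ?v + z *\<^sub>R ?u)"] approx[of "x + z *\<^sub>R ?u"]
      mult_left_mono[OF _ \<open>0 \<le> c\<close>] by (force+)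
  moreover have "D (h *\<^sub>R ?v + z *\<^sub>R ?u) - D (z *\<^sub>R ?u) = h * D ?v"
    using linear_add[OF assms(2)] linear_scale[OF assms(2)] by simp
  ultimately have "\<bar>pd i f (x + (h *\<^sub>R ?v + z *\<^sub>R ?u)) - pd i f (x + z *\<^sub>R ?u) - h * D ?v\<bar> \<le> 4 * c * h"
    by linarith
  moreover have "second_difference f x ?u ?v h / h\<^sup>2 - D ?v
      = (pd i f (x + (h *\<^sub>R ?v + z *\<^sub>R ?u)) - pd i f (x + z *\<^sub>R ?u) - h * D ?v) / h"
    using assms(1) unfolding mvt by (simp add: power2_eq_square field_simps)
  ultimately show ?thesis
    using assms(1) by (simp add: abs_divide divide_le_eq)
qed

lemma second_difference_tendsto:
  fixes f :: "real^'n::finite \<Rightarrow> real"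
  assumes "open U" "x \<in> U" "\<And>y. y \<in> U \<Longrightarrow> f differentiable at y"
    and D: "(pd i f has_derivative D) (at x)"
  shows "((\<lambda>h. second_difference f x (axis i 1) (axis j 1) h / h\<^sup>2) \<longlongrightarrow> D (axis j 1)) (at_right 0)"
proof -
  obtain r where r: "r > 0" "ball x r \<subseteq> U"
    using assms(1,2) open_contains_ball by blast
  show ?thesis
    unfolding tendsto_iff eventually_at_right_field dist_real_def
  proof (intro allI impI)
    fix e :: real assume "e > 0"
    then obtain d where "d > 0" and approx: "\<And>y. norm (y - x) < d \<Longrightarrow>
        norm (pd i f y - pd i f x - D (y - x)) \<le> e/8 * norm (y - x)"
      using D[unfolded has_derivative_at_alt] by (metis divide_pos_pos zero_less_numeral)
    have "\<bar>second_difference f x (axis i 1) (axis j 1) h / h\<^sup>2 - D (axis j 1)\<bar> < e"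
      if h: "0 < h" "h < min d r / 3" for h
    proof -
      have "y \<in> U" if "norm (y - x) \<le> 2 * h" for y
        using that h r by (auto simp: dist_norm norm_minus_commute)
      then have "\<bar>second_difference f x (axis i 1) (axis j 1) h / h\<^sup>2 - D (axis j 1)\<bar> \<le> 4 * (e/8)"
        using approx h \<open>e > 0\<close> D has_derivative_linear
        by (intro second_difference_quotient_estimate) (auto intro: assms(3))
      then show ?thesis
        using \<open>e > 0\<close> by simp
    qed
    moreover have "0 < min d r / 3"
      using \<open>d > 0\<close> r(1) by simp
    ultimately show "\<exists>b>0. \<forall>h>0. h < b \<longrightarrow>
        \<bar>second_difference f x (axis i 1) (axis j 1) h / h\<^sup>2 - D (axis j 1)\<bar> < e"
      by blast
  qed
qed

lemma pd_pd_commute: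
  fixes f :: "real^'n::finite \<Rightarrow> real"
  assumes "open U" "x \<in> U" "\<And>y. y \<in> U \<Longrightarrow> f differentiable at y"
    and "pd i f differentiable at x" "pd j f differentiable at x"
  shows "pd j (pd i f) x = pd i (pd j f) x"
proof (rule tendsto_unique[OF trivial_limit_at_right_real])
  show "((\<lambda>h. second_difference f x (axis i 1) (axis j 1) h / h\<^sup>2) \<longlongrightarrow> pd j (pd i f) x) (at_right 0)"
    using second_difference_tendsto[OF assms(1-3) assms(4)[THEN frechet_derivative_works[THEN iffD1]]]
    unfolding pd_def[of j] .
  show "((\<lambda>h. second_difference f x (axis i 1) (axis j 1) h / h\<^sup>2) \<longlongrightarrow> pd i (pd j f) x) (at_right 0)"
    using second_difference_tendsto[OF assms(1-3) assms(5)[THEN frechet_derivative_works[THEN iffD1]]]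
    unfolding pd_def[of i] second_difference_commute[of f x "axis j 1"] .
qed

section \<open>Determinants and inverse matrices\<close>

lemma differentiable_prod:
  fixes f :: "'i \<Rightarrow> 'a::real_normed_vector \<Rightarrow> 'b::real_normed_field"
  assumes "\<And>i. i \<in> I \<Longrightarrow> f i differentiable at x"
  shows "(\<lambda>y. \<Prod>i\<in>I. f i y) differentiable at x"
proof -
  have "\<And>i. i \<in> I \<Longrightarrow> (f i has_derivative frechet_derivative (f i) (at x)) (at x)"
    using assms frechet_derivative_works by blast
  then have "((\<lambda>y. \<Prod>i\<in>I. f i y) has_derivative
      (\<lambda>h. \<Sum>i\<in>I. frechet_derivative (f i) (at x) h * (\<Prod>j\<in>I - {i}. f j x))) (at x)"
    by (rule has_derivative_prod)
  then show ?thesis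
    unfolding differentiable_def by blast
qed

lemma differentiable_det:
  fixes M :: "real^'n::finite \<Rightarrow> real^'m::finite^'m"
  assumes "\<And>r s. (\<lambda>y. M y $ r $ s) differentiable at x"
  shows "(\<lambda>y. det (M y)) differentiable at x"
proof -
  have "(\<lambda>y. \<Prod>i\<in>UNIV. M y $ i $ p i) differentiable at x" for p :: "'m \<Rightarrow> 'm"
    using assms by (rule differentiable_prod)
  then show ?thesis
    unfolding det_def
    by (intro differentiable_sum) (auto simp: finite_permutations intro!: differentiable_mult)
qed

lemma matrix_inv_cancel:
  assumes "invertible (G::real^'n::finite^'n)"
  shows "G ** matrix_inv G = mat 1" "matrix_inv G ** G = mat 1"
  using assms unfolding invertible_def matrix_inv_def by (metis (mono_tags, lifting) someI_ex)+

lemma matrix_inv_entry: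
  assumes "invertible (G::real^'n::finite^'n)"
  shows "matrix_inv G $ i $ k = det (\<chi> r s. if s = i then axis k 1 $ r else G $ r $ s) / det G"
proof -
  have "G *v (matrix_inv G *v axis k 1) = axis k 1"
    using matrix_inv_cancel(1)[OF assms] by (simp add: matrix_vector_mul_assoc)
  then have "matrix_inv G *v axis k 1 = (\<chi> k'. det (\<chi> r s. if s = k' then axis k 1 $ r else G $ r $ s) / det G)"
    using cramer[OF assms[unfolded invertible_det_nz]] by blast
  moreover have "(matrix_inv G *v axis k 1) $ i = matrix_inv G $ i $ k"
    by (simp add: matrix_vector_mult_def axis_def if_distrib sum.delta cong: if_cong)
  ultimately show ?thesis
    by simp
qed

lemma differentiable_matrix_inv_entry:
  fixes M :: "real^'n::finite \<Rightarrow> real^'m::finite^'m"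
  assumes "open U" "x \<in> U" "\<And>y. y \<in> U \<Longrightarrow> invertible (M y)"
    and "\<And>r s. (\<lambda>y. M y $ r $ s) differentiable at x"
  shows "(\<lambda>y. matrix_inv (M y) $ i $ k) differentiable at x"
proof -
  have "(\<lambda>y. if s = i then axis k 1 $ r else M y $ r $ s) differentiable at x" for r s
    by (cases "s = i") (simp_all add: assms(4))
  then have "(\<lambda>y. det (\<chi> r s. if s = i then axis k 1 $ r else M y $ r $ s) / det (M y)) differentiable at x"
    using assms(3)[OF assms(2), unfolded invertible_det_nz] assms(4)
    by (intro differentiable_divide differentiable_det) auto
  then obtain D where
    "((\<lambda>y. det (\<chi> r s. if s = i then axis k 1 $ r else M y $ r $ s) / det (M y)) has_derivative D) (at x)"
    unfolding differentiable_def by blast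
  then have "((\<lambda>y. matrix_inv (M y) $ i $ k) has_derivative D) (at x)"
    by (rule has_derivative_transform_within_open[OF _ assms(1,2)]) (simp add: matrix_inv_entry assms(3))
  then show ?thesis
    unfolding differentiable_def by blast
qed

lemma lorentzian_matrix_invertible:
  assumes "lorentzian_matrix (G::real^'n::finite^'n)"
  shows "invertible G"
proof -
  obtain E :: "real^'n^'n" and i0
    where EGE: "transpose E ** G ** E = (\<chi> i j. if i = j then (if i = i0 then -1 else 1) else 0)"
    using assms unfolding lorentzian_matrix_def by blast
  have "det (transpose E ** G ** E) = (\<Prod>i\<in>UNIV. (transpose E ** G ** E) $ i $ i)"
    unfolding EGE by (rule det_diagonal) simp
  also have "\<dots> \<noteq> 0"
    unfolding EGE by simp
  finally show ?thesis
    by (simp add: det_mul invertible_det_nz)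
qed

lemma kdelta_mult:
  "kdelta a b * y = (if a = b then y else 0)" "y * kdelta a b = (if a = b then y else 0)"
  by (simp_all add: kdelta_def)

lemma sum_kdelta [simp]:
  fixes c :: "'a::finite" and f :: "'a \<Rightarrow> real"
  shows "(\<Sum>m\<in>UNIV. kdelta c m * f m) = f c" "(\<Sum>m\<in>UNIV. f m * kdelta c m) = f c"
    "(\<Sum>m\<in>UNIV. kdelta m c * f m) = f c" "(\<Sum>m\<in>UNIV. f m * kdelta m c) = f c"
  by (simp_all add: kdelta_mult sum.delta sum.delta')

lemma kdelta_same [simp]: "kdelta a a = 1"
  by (simp add: kdelta_def)

locale metric_chart =
  fixes U :: "(real^'n::finite) set" and g :: "real^'n \<Rightarrow> real^'n^'n"
  assumes open_U: "open U"
    and smooth_g: "\<And>i j. smooth_on U (\<lambda>x. g x $ i $ j)"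
    and g_symmetric: "\<And>x i j. x \<in> U \<Longrightarrow> g x $ i $ j = g x $ j $ i"
    and g_invertible: "\<And>x. x \<in> U \<Longrightarrow> invertible (g x)"

lemma lorentzian_metric_chart:
  assumes "lorentzian_metric U g"
  shows "metric_chart U g"
proof
  fix x i j assume "x \<in> U"
  then have "lorentzian_matrix (g x)"
    using assms unfolding lorentzian_metric_def by blast
  then have "transpose (g x) $ j $ i = g x $ j $ i"
    unfolding lorentzian_matrix_def by simp
  then show "g x $ i $ j = g x $ j $ i"
    by (simp add: transpose_def)
  show "invertible (g x)"
    using \<open>lorentzian_matrix (g x)\<close> lorentzian_matrix_invertible by blast
qed (use assms in \<open>auto simp: lorentzian_metric_def\<close>)

context metric_chart
begin

lemma g_differentiable: "x \<in> U \<Longrightarrow> (\<lambda>y. g y $ i $ j) differentiable at x"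
  using smooth_on_iter_pd_differentiable[OF smooth_g open_U, of x "[]"] by simp

lemma pd_g_differentiable: "x \<in> U \<Longrightarrow> pd k (\<lambda>y. g y $ i $ j) differentiable at x"
  using smooth_on_iter_pd_differentiable[OF smooth_g open_U, of x "[k]"] by simp

lemma ginv_g:
  assumes x: "x \<in> U"
  shows "(\<Sum>k\<in>UNIV. ginv g x $ i $ k * g x $ k $ j) = kdelta i j"
proof -
  have "(ginv g x ** g x) $ i $ j = mat 1 $ i $ j"
    using matrix_inv_cancel(2)[OF g_invertible[OF x]] unfolding ginv_def by simp
  then show ?thesis
    by (simp add: matrix_matrix_mult_def mat_def kdelta_def)
qed

lemma g_ginv:
  assumes x: "x \<in> U"
  shows "(\<Sum>k\<in>UNIV. g x $ k $ i * ginv g x $ k $ j) = kdelta i j"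
proof -
  have "(g x ** ginv g x) $ i $ j = mat 1 $ i $ j"
    using matrix_inv_cancel(1)[OF g_invertible[OF x]] unfolding ginv_def by simp
  then show ?thesis
    using g_symmetric[OF x] by (simp add: matrix_matrix_mult_def mat_def kdelta_def)
qed

lemma ginv_differentiable: "x \<in> U \<Longrightarrow> (\<lambda>y. ginv g y $ i $ k) differentiable at x"
  unfolding ginv_def by (rule differentiable_matrix_inv_entry[OF open_U _ g_invertible g_differentiable])

lemma pd_g_symmetric: "x \<in> U \<Longrightarrow> pd k (\<lambda>y. g y $ i $ j) x = pd k (\<lambda>y. g y $ j $ i) x"
  by (rule pd_cong_on_open[OF open_U]) (auto intro: g_symmetric)

lemma christoffel_differentiable: "x \<in> U \<Longrightarrow> christoffel g k i j differentiable at x"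
  unfolding christoffel_def[abs_def]
  by (intro differentiable_mult differentiable_const differentiable_sum ballI
      differentiable_add differentiable_diff ginv_differentiable pd_g_differentiable) auto

lemma christoffel_symmetric: "x \<in> U \<Longrightarrow> christoffel g k i j x = christoffel g k j i x"
  unfolding christoffel_def using pd_g_symmetric[of x] by (simp add: algebra_simps)

lemma christoffel_lowered:
  assumes x: "x \<in> U"
  shows "(\<Sum>l\<in>UNIV. christoffel g l a b x * g x $ l $ c)
    = (1/2) * (pd a (\<lambda>y. g y $ b $ c) x + pd b (\<lambda>y. g y $ a $ c) x - pd c (\<lambda>y. g y $ a $ b) x)"
proof -
  define X where "X m = pd a (\<lambda>y. g y $ b $ m) x + pd b (\<lambda>y. g y $ a $ m) x - pd m (\<lambda>y. g y $ a $ b) x" for m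
  have "(\<Sum>l\<in>UNIV. christoffel g l a b x * g x $ l $ c)
      = (\<Sum>l\<in>UNIV. (1/2) * (\<Sum>m\<in>UNIV. g x $ l $ c * ginv g x $ l $ m * X m))"
    unfolding christoffel_def X_def
    by (intro sum.cong refl) (simp add: sum_distrib_left sum_distrib_right algebra_simps)
  also have "\<dots> = (1/2) * (\<Sum>l\<in>UNIV. \<Sum>m\<in>UNIV. g x $ l $ c * ginv g x $ l $ m * X m)"
    by (simp add: sum_distrib_left)
  also have "\<dots> = (1/2) * (\<Sum>m\<in>UNIV. \<Sum>l\<in>UNIV. g x $ l $ c * ginv g x $ l $ m * X m)"
    by (subst sum.swap) (rule refl)
  also have "\<dots> = (1/2) * (\<Sum>m\<in>UNIV. (\<Sum>l\<in>UNIV. g x $ l $ c * ginv g x $ l $ m) * X m)"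
    by (simp add: sum_distrib_right)
  also have "\<dots> = (1/2) * X c"
    by (simp add: g_ginv[OF x])
  finally show ?thesis
    unfolding X_def .
qed

lemma pd_g_christoffel:
  "x \<in> U \<Longrightarrow> pd a (\<lambda>y. g y $ b $ c) x =
     (\<Sum>l\<in>UNIV. christoffel g l a b x * g x $ l $ c) + (\<Sum>l\<in>UNIV. christoffel g l a c x * g x $ l $ b)"
  using christoffel_lowered[of x a b c] christoffel_lowered[of x a c b] pd_g_symmetric[of x] by simp

lemma lowered_eq_0_imp_eq_0:
  assumes x: "x \<in> U" and "\<And>b. (\<Sum>k\<in>UNIV. g x $ b $ k * W k) = 0"
  shows "W m = 0"
proof -
  have "W m = (\<Sum>b\<in>UNIV. (\<Sum>k\<in>UNIV. ginv g x $ m $ k * g x $ k $ b) * W b)"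
    by (simp add: ginv_g[OF x])
  also have "\<dots> = (\<Sum>b\<in>UNIV. \<Sum>k\<in>UNIV. ginv g x $ m $ k * g x $ k $ b * W b)"
    by (simp add: sum_distrib_right)
  also have "\<dots> = (\<Sum>k\<in>UNIV. \<Sum>b\<in>UNIV. ginv g x $ m $ k * g x $ k $ b * W b)"
    by (rule sum.swap)
  also have "\<dots> = (\<Sum>k\<in>UNIV. ginv g x $ m $ k * (\<Sum>b\<in>UNIV. g x $ k $ b * W b))"
    by (simp add: sum_distrib_left mult_ac)
  also have "\<dots> = 0"
    by (simp add: assms(2))
  finally show ?thesis .
qed

end

section \<open>Unit timelike and concircular vector fields\<close>

text \<open>In the coordinate frame, nabla_pi g P a b = (\<nabla>_a \<pi>)_b and nabla_P g P a m = (\<nabla>_a P)^m.\<close>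

definition nabla_pi ::
  "(real^'n::finite \<Rightarrow> real^'n^'n) \<Rightarrow> (real^'n \<Rightarrow> real^'n) \<Rightarrow> 'n \<Rightarrow> 'n \<Rightarrow> real^'n \<Rightarrow> real" where
  "nabla_pi g P a b x = pd a (pi_form g P b) x - (\<Sum>p\<in>UNIV. christoffel g p a b x * pi_form g P p x)"

definition nabla_P ::
  "(real^'n::finite \<Rightarrow> real^'n^'n) \<Rightarrow> (real^'n \<Rightarrow> real^'n) \<Rightarrow> 'n \<Rightarrow> 'n \<Rightarrow> real^'n \<Rightarrow> real" where
  "nabla_P g P a m x = pd a (\<lambda>y. P y $ m) x + (\<Sum>q\<in>UNIV. christoffel g m a q x * P x $ q)"

locale unit_timelike_chart = metric_chart U g for U :: "(real^'n::finite) set" and g +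
  fixes P :: "real^'n \<Rightarrow> real^'n"
  assumes smooth_P: "\<And>k. smooth_on U (\<lambda>x. P x $ k)"
    and P_unit: "\<And>x. x \<in> U \<Longrightarrow> (\<Sum>i\<in>UNIV. \<Sum>j\<in>UNIV. g x $ i $ j * P x $ i * P x $ j) = -1"
begin

lemma P_differentiable: "x \<in> U \<Longrightarrow> (\<lambda>y. P y $ k) differentiable at x"
  using smooth_on_iter_pd_differentiable[OF smooth_P open_U, of x "[]"] by simp

lemma pd_P_differentiable: "x \<in> U \<Longrightarrow> pd a (\<lambda>y. P y $ k) differentiable at x"
  using smooth_on_iter_pd_differentiable[OF smooth_P open_U, of x "[a]"] by simp

lemma pi_differentiable: "x \<in> U \<Longrightarrow> pi_form g P j differentiable at x"
  unfolding pi_form_def[abs_def]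
  by (intro differentiable_mult differentiable_sum ballI g_differentiable P_differentiable) auto

lemma g_P: "x \<in> U \<Longrightarrow> (\<Sum>k\<in>UNIV. g x $ k $ j * P x $ k) = pi_form g P j x"
  unfolding pi_form_def by (rule sum.cong[OF refl]) (metis g_symmetric)

lemma ginv_pi:
  assumes x: "x \<in> U"
  shows "(\<Sum>j\<in>UNIV. ginv g x $ i $ j * pi_form g P j x) = P x $ i"
proof -
  have "(\<Sum>j\<in>UNIV. ginv g x $ i $ j * pi_form g P j x)
      = (\<Sum>j\<in>UNIV. \<Sum>k\<in>UNIV. ginv g x $ i $ j * g x $ j $ k * P x $ k)"
    unfolding pi_form_def by (simp add: sum_distrib_left mult.assoc)
  also have "\<dots> = (\<Sum>k\<in>UNIV. (\<Sum>j\<in>UNIV. ginv g x $ i $ j * g x $ j $ k) * P x $ k)"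
    by (subst sum.swap) (simp add: sum_distrib_right)
  also have "\<dots> = P x $ i"
    by (simp add: ginv_g[OF x])
  finally show ?thesis .
qed

lemma pi_P: "x \<in> U \<Longrightarrow> (\<Sum>j\<in>UNIV. pi_form g P j x * P x $ j) = -1"
  using P_unit unfolding pi_form_def sum_distrib_right by (simp add: mult_ac)

lemma pi_nonzero:
  assumes "x \<in> U"
  obtains a where "pi_form g P a x \<noteq> 0"
  using pi_P[OF assms] by fastforce

lemma pd_pi:
  assumes x: "x \<in> U"
  shows "pd a (pi_form g P j) x =
    (\<Sum>k\<in>UNIV. pd a (\<lambda>y. g y $ j $ k) x * P x $ k + g x $ j $ k * pd a (\<lambda>y. P y $ k) x)"
proof -
  have "pd a (pi_form g P j) x = (\<Sum>k\<in>UNIV. pd a (\<lambda>y. g y $ j $ k * P y $ k) x)"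
    unfolding pi_form_def[abs_def]
    by (rule pd_sum) (auto intro!: differentiable_mult g_differentiable[OF x] P_differentiable[OF x])
  then show ?thesis
    by (simp add: pd_mult[OF g_differentiable[OF x] P_differentiable[OF x]])
qed

lemma lower_nabla_P:
  assumes x: "x \<in> U"
  shows "(\<Sum>k\<in>UNIV. g x $ b $ k * nabla_P g P a k x) = nabla_pi g P a b x"
proof -
  define T where "T = (\<Sum>k\<in>UNIV. \<Sum>l\<in>UNIV. christoffel g l a k x * g x $ l $ b * P x $ k)"
  have "(\<Sum>k\<in>UNIV. pd a (\<lambda>y. g y $ b $ k) x * P x $ k)
      = (\<Sum>k\<in>UNIV. \<Sum>l\<in>UNIV. christoffel g l a b x * g x $ l $ k * P x $ k) + T"
    unfolding T_def pd_g_christoffel[OF x] by (simp add: distrib_right sum.distrib sum_distrib_right)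
  also have "(\<Sum>k\<in>UNIV. \<Sum>l\<in>UNIV. christoffel g l a b x * g x $ l $ k * P x $ k)
      = (\<Sum>l\<in>UNIV. christoffel g l a b x * pi_form g P l x)"
    unfolding pi_form_def by (subst sum.swap) (simp add: sum_distrib_left mult_ac)
  finally have pd_g_P: "(\<Sum>k\<in>UNIV. pd a (\<lambda>y. g y $ b $ k) x * P x $ k)
      = (\<Sum>l\<in>UNIV. christoffel g l a b x * pi_form g P l x) + T" .
  have "(\<Sum>k\<in>UNIV. g x $ b $ k * (\<Sum>q\<in>UNIV. christoffel g k a q x * P x $ q))
      = (\<Sum>k\<in>UNIV. \<Sum>q\<in>UNIV. christoffel g k a q x * g x $ k $ b * P x $ q)"
    by (rule sum.cong[OF refl]) (simp add: sum_distrib_left mult_ac g_symmetric[OF x, of b])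
  also have "\<dots> = T"
    unfolding T_def by (rule sum.swap)
  finally have g_christoffel_P: "(\<Sum>k\<in>UNIV. g x $ b $ k * (\<Sum>q\<in>UNIV. christoffel g k a q x * P x $ q)) = T" .
  show ?thesis
    unfolding nabla_pi_def nabla_P_def pd_pi[OF x] using pd_g_P g_christoffel_P
    by (simp add: sum.distrib distrib_left)
qed

lemma pd_pi_P:
  assumes x: "x \<in> U"
  shows "(\<Sum>j\<in>UNIV. pd a (pi_form g P j) x * P x $ j + pi_form g P j x * pd a (\<lambda>y. P y $ j) x) = 0"
proof -
  have "pd a (\<lambda>y. \<Sum>j\<in>UNIV. pi_form g P j y * P y $ j) x = pd a (\<lambda>y. -1) x"
    by (rule pd_cong_on_open[OF open_U x]) (simp add: pi_P)
  then show ?thesis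
    using pi_differentiable[OF x] P_differentiable[OF x]
    by (subst (asm) pd_sum) (auto simp: pd_mult intro!: differentiable_mult)
qed

lemma nabla_pi_P:
  assumes x: "x \<in> U"
  shows "(\<Sum>j\<in>UNIV. nabla_pi g P a j x * P x $ j) = 0"
proof -
  define A where "A = (\<Sum>j\<in>UNIV. pd a (pi_form g P j) x * P x $ j)"
  define C where "C = (\<Sum>k\<in>UNIV. pi_form g P k x * pd a (\<lambda>y. P y $ k) x)"
  define D where "D = (\<Sum>k\<in>UNIV. \<Sum>q\<in>UNIV. pi_form g P k x * christoffel g k a q x * P x $ q)"
  \<comment> \<open>both A - D and C + D compute g(\<nabla>_a P, P), while A + C = 0\<close>
  have "A + C = 0"
    using pd_pi_P[OF x] unfolding A_def C_def by (simp add: sum.distrib)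
  moreover have "(\<Sum>j\<in>UNIV. nabla_pi g P a j x * P x $ j) = A - D"
  proof -
    have "(\<Sum>j\<in>UNIV. \<Sum>p\<in>UNIV. christoffel g p a j x * pi_form g P p x * P x $ j) = D"
      unfolding D_def by (subst sum.swap) (simp add: mult_ac)
    then show ?thesis
      unfolding nabla_pi_def A_def by (simp add: left_diff_distrib sum_subtractf sum_distrib_right)
  qed
  moreover have "(\<Sum>j\<in>UNIV. nabla_pi g P a j x * P x $ j) = C + D"
  proof -
    have "(\<Sum>j\<in>UNIV. nabla_pi g P a j x * P x $ j)
        = (\<Sum>j\<in>UNIV. \<Sum>k\<in>UNIV. g x $ j $ k * nabla_P g P a k x * P x $ j)"
      by (simp add: lower_nabla_P[OF x, symmetric] sum_distrib_right)
    also have "\<dots> = (\<Sum>k\<in>UNIV. \<Sum>j\<in>UNIV. g x $ j $ k * nabla_P g P a k x * P x $ j)"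
      by (rule sum.swap)
    also have "\<dots> = (\<Sum>k\<in>UNIV. (\<Sum>j\<in>UNIV. g x $ j $ k * P x $ j) * nabla_P g P a k x)"
      by (simp add: sum_distrib_left sum_distrib_right mult_ac)
    also have "\<dots> = C + D"
      unfolding g_P[OF x] C_def D_def nabla_P_def
      by (simp add: distrib_left sum.distrib sum_distrib_left mult.assoc)
    finally show ?thesis .
  qed
  ultimately show ?thesis
    by linarith
qed

end

locale concircular_chart = unit_timelike_chart U g P for U :: "(real^'n::finite) set" and g P +
  assumes concircular: "concircular U g P"
begin

lemma nabla_pi_eq:
  assumes x: "x \<in> U"
  shows "nabla_pi g P a b x = g x $ a $ b + pi_form g P a x * pi_form g P b x"
proof -
  obtain \<omega> where \<omega>: "\<And>a b. nabla_pi g P a b x = pi_form g P a x * pi_form g P b x + \<omega> x * g x $ a $ b"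
    using concircular x unfolding concircular_def nabla_pi_def by (fastforce simp: algebra_simps)
  obtain a where a: "pi_form g P a x \<noteq> 0"
    using pi_nonzero[OF x] by blast
  have "0 = (\<Sum>j\<in>UNIV. nabla_pi g P a j x * P x $ j)"
    using nabla_pi_P[OF x] by simp
  also have "\<dots> = pi_form g P a x * (\<Sum>j\<in>UNIV. pi_form g P j x * P x $ j)
      + \<omega> x * (\<Sum>j\<in>UNIV. g x $ a $ j * P x $ j)"
    unfolding \<omega> by (simp add: algebra_simps sum.distrib sum_distrib_left)
  also have "\<dots> = (\<omega> x - 1) * pi_form g P a x"
    unfolding pi_P[OF x] pi_form_def[of g P a x, symmetric] by (simp add: algebra_simps)
  finally have "\<omega> x = 1"
    using a by simp
  then show ?thesis
    using \<omega> by simp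
qed

lemma pd_pi_eq:
  "x \<in> U \<Longrightarrow> pd a (pi_form g P b) x =
     (\<Sum>p\<in>UNIV. christoffel g p a b x * pi_form g P p x) + g x $ a $ b + pi_form g P a x * pi_form g P b x"
  using nabla_pi_eq unfolding nabla_pi_def by (simp add: algebra_simps)

lemma pd_pi_symmetric: "x \<in> U \<Longrightarrow> pd a (pi_form g P b) x = pd b (pi_form g P a) x"
  using pd_pi_eq[of x a b] pd_pi_eq[of x b a] christoffel_symmetric[of x] g_symmetric[of x a b]
  by (simp add: mult.commute)

lemma nabla_P_eq:
  assumes x: "x \<in> U"
  shows "nabla_P g P a m x = kdelta m a + pi_form g P a x * P x $ m"
proof -
  define W where "W k = nabla_P g P a k x - kdelta k a - pi_form g P a x * P x $ k" for k
  have "(\<Sum>k\<in>UNIV. g x $ b $ k * W k) = 0" for b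
  proof -
    have "(\<Sum>k\<in>UNIV. g x $ b $ k * W k) = nabla_pi g P a b x - g x $ b $ a
        - pi_form g P a x * (\<Sum>k\<in>UNIV. g x $ b $ k * P x $ k)"
      unfolding W_def lower_nabla_P[OF x, symmetric]
      by (simp add: algebra_simps sum_subtractf sum_distrib_left sum.distrib)
    then show ?thesis
      using nabla_pi_eq[OF x, of a b] g_symmetric[OF x, of a b] by (simp add: pi_form_def)
  qed
  then have "W m = 0"
    by (rule lowered_eq_0_imp_eq_0[OF x])
  then show ?thesis
    unfolding W_def by (simp add: kdelta_def)
qed

lemma pd_P_eq:
  "x \<in> U \<Longrightarrow> pd a (\<lambda>y. P y $ m) x =
     kdelta m a + pi_form g P a x * P x $ m - (\<Sum>q\<in>UNIV. christoffel g m a q x * P x $ q)"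
  using nabla_P_eq unfolding nabla_P_def by (simp add: algebra_simps)

lemma sum_pd_christoffel_P:
  assumes x: "x \<in> U"
  shows "(\<Sum>c\<in>UNIV. pd a (christoffel g m b c) x * P x $ c)
    = pd a (pi_form g P b) x * P x $ m + pi_form g P b x * pd a (\<lambda>y. P y $ m) x
      - pd a (pd b (\<lambda>y. P y $ m)) x - (\<Sum>p\<in>UNIV. christoffel g m b p x * pd a (\<lambda>y. P y $ p) x)"
proof -
  have "pd a (\<lambda>y. pd b (\<lambda>y. P y $ m) y + (\<Sum>p\<in>UNIV. christoffel g m b p y * P y $ p)) x
      = pd a (\<lambda>y. kdelta m b + pi_form g P b y * P y $ m) x"
    by (rule pd_cong_on_open[OF open_U x]) (simp add: pd_P_eq)
  moreover have "pd a (\<lambda>y. pd b (\<lambda>y. P y $ m) y + (\<Sum>p\<in>UNIV. christoffel g m b p y * P y $ p)) x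
      = pd a (pd b (\<lambda>y. P y $ m)) x + (\<Sum>p\<in>UNIV. pd a (christoffel g m b p) x * P x $ p
          + christoffel g m b p x * pd a (\<lambda>y. P y $ p) x)"
    using christoffel_differentiable[OF x] P_differentiable[OF x] pd_P_differentiable[OF x]
    by (simp add: pd_add pd_sum pd_mult differentiable_mult)
  moreover have "pd a (\<lambda>y. kdelta m b + pi_form g P b y * P y $ m) x
      = pd a (pi_form g P b) x * P x $ m + pi_form g P b x * pd a (\<lambda>y. P y $ m) x"
    using pi_differentiable[OF x] P_differentiable[OF x]
    by (simp add: pd_add pd_mult differentiable_mult)
  ultimately show ?thesis
    by (simp add: sum.distrib algebra_simps)
qed

lemma curvg_P:
  assumes x: "x \<in> U"
  shows "(\<Sum>c\<in>UNIV. curvg g a b c m x * P x $ c) = pi_form g P b x * kdelta m a - pi_form g P a x * kdelta m b"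
proof -
  define V where "V m b = (\<Sum>q\<in>UNIV. christoffel g m b q x * P x $ q)" for m b
  have quadratic: "(\<Sum>c\<in>UNIV. (\<Sum>p\<in>UNIV. christoffel g p b c x * christoffel g m a p x) * P x $ c)
      = (\<Sum>p\<in>UNIV. christoffel g m a p x * V p b)" for a b
  proof -
    have "(\<Sum>c\<in>UNIV. (\<Sum>p\<in>UNIV. christoffel g p b c x * christoffel g m a p x) * P x $ c)
        = (\<Sum>c\<in>UNIV. \<Sum>p\<in>UNIV. christoffel g m a p x * christoffel g p b c x * P x $ c)"
      by (simp add: sum_distrib_left sum_distrib_right mult_ac)
    also have "\<dots> = (\<Sum>p\<in>UNIV. \<Sum>c\<in>UNIV. christoffel g m a p x * christoffel g p b c x * P x $ c)"
      by (rule sum.swap)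
    finally show ?thesis
      unfolding V_def by (simp add: sum_distrib_left mult.assoc)
  qed
  have "(\<Sum>c\<in>UNIV. curvg g a b c m x * P x $ c)
      = (\<Sum>c\<in>UNIV. pd a (christoffel g m b c) x * P x $ c) - (\<Sum>c\<in>UNIV. pd b (christoffel g m a c) x * P x $ c)
        + (\<Sum>p\<in>UNIV. christoffel g m a p x * V p b) - (\<Sum>p\<in>UNIV. christoffel g m b p x * V p a)"
    unfolding curvg_def curv_def quadratic[symmetric] by (simp add: algebra_simps sum.distrib sum_subtractf)
  moreover have "(\<Sum>p\<in>UNIV. christoffel g m b p x * pd a (\<lambda>y. P y $ p) x)
      = christoffel g m b a x + pi_form g P a x * V m b - (\<Sum>p\<in>UNIV. christoffel g m b p x * V p a)" for a b
    unfolding pd_P_eq[OF x] V_def by (simp add: algebra_simps sum.distrib sum_subtractf sum_distrib_left)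
  moreover have "pd a (pd b (\<lambda>y. P y $ m)) x = pd b (pd a (\<lambda>y. P y $ m)) x"
    by (rule pd_pd_commute[OF open_U x P_differentiable pd_P_differentiable[OF x] pd_P_differentiable[OF x]])
  ultimately show ?thesis
    unfolding sum_pd_christoffel_P[OF x] pd_P_eq[OF x, of a m] pd_P_eq[OF x, of b m] V_def[symmetric]
    using pd_pi_symmetric[OF x, of a b] christoffel_symmetric[OF x, of m a b]
    by (simp add: algebra_simps)
qed

end

section \<open>Curvature of the semi-symmetric metric connection\<close>

lemma torsion1_torsion1:
  "(\<Sum>p\<in>UNIV. torsion1 g P p a b x * torsion1 g P m p c x)
   = pi_form g P b x * pi_form g P c x * kdelta m a - pi_form g P a x * pi_form g P c x * kdelta m b"
  unfolding torsion1_def by (simp add: algebra_simps sum_subtractf sum.distrib)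

context concircular_chart
begin

lemma pd_conn1:
  assumes x: "x \<in> U"
  shows "pd a (conn1 g P m b c) x = pd a (christoffel g m b c) x + pd a (pi_form g P c) x * kdelta m b
    - (pd a (\<lambda>y. g y $ b $ c) x * P x $ m + g x $ b $ c * pd a (\<lambda>y. P y $ m) x)"
proof -
  have "(\<lambda>y. pi_form g P c y * kdelta m b) differentiable at x"
    "(\<lambda>y. g y $ b $ c * P y $ m) differentiable at x"
    "(\<lambda>y. christoffel g m b c y + pi_form g P c y * kdelta m b) differentiable at x"
    using christoffel_differentiable[OF x] pi_differentiable[OF x] g_differentiable[OF x] P_differentiable[OF x]
    by (auto intro!: differentiable_mult differentiable_add)
  then show ?thesis
    unfolding conn1_def[abs_def]
    using christoffel_differentiable[OF x] pi_differentiable[OF x] g_differentiable[OF x] P_differentiable[OF x]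
    by (simp add: pd_diff pd_add pd_mult_const pd_mult)
qed

lemma pd_torsion1:
  assumes x: "x \<in> U"
  shows "pd b (torsion1 g P m a c) x = pd b (pi_form g P c) x * kdelta m a - pd b (pi_form g P a) x * kdelta m c"
proof -
  have "(\<lambda>y. pi_form g P c y * kdelta m a) differentiable at x" "(\<lambda>y. pi_form g P a y * kdelta m c) differentiable at x"
    using pi_differentiable[OF x] by (auto intro!: differentiable_mult)
  then show ?thesis
    unfolding torsion1_def[abs_def] using pi_differentiable[OF x] by (simp add: pd_diff pd_mult_const)
qed

lemma sum_conn1_pi:
  assumes x: "x \<in> U"
  shows "(\<Sum>p\<in>UNIV. conn1 g P p b c x * pi_form g P p x)
    = (\<Sum>p\<in>UNIV. christoffel g p b c x * pi_form g P p x) + pi_form g P b x * pi_form g P c x + g x $ b $ c"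
proof -
  have "(\<Sum>p\<in>UNIV. conn1 g P p b c x * pi_form g P p x)
     = (\<Sum>p\<in>UNIV. christoffel g p b c x * pi_form g P p x) + pi_form g P c x * pi_form g P b x
       - g x $ b $ c * (\<Sum>p\<in>UNIV. pi_form g P p x * P x $ p)"
    unfolding conn1_def by (simp add: algebra_simps sum.distrib sum_subtractf sum_distrib_left)
  then show ?thesis
    using pi_P[OF x] by (simp add: mult.commute)
qed

lemma nabla1_torsion_eq_0:
  assumes x: "x \<in> U"
  shows "nabla1_torsion g P b m a c x = 0"
proof -
  have "(\<Sum>p\<in>UNIV. conn1 g P m b p x * torsion1 g P p a c x)
      = pi_form g P c x * conn1 g P m b a x - pi_form g P a x * conn1 g P m b c x"
    "(\<Sum>p\<in>UNIV. conn1 g P p b a x * torsion1 g P m p c x)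
      = pi_form g P c x * conn1 g P m b a x - kdelta m c * (\<Sum>p\<in>UNIV. conn1 g P p b a x * pi_form g P p x)"
    "(\<Sum>p\<in>UNIV. conn1 g P p b c x * torsion1 g P m a p x)
      = kdelta m a * (\<Sum>p\<in>UNIV. conn1 g P p b c x * pi_form g P p x) - pi_form g P a x * conn1 g P m b c x"
    unfolding torsion1_def by (simp_all add: algebra_simps sum_subtractf sum_distrib_left)
  then show ?thesis
    unfolding nabla1_torsion_def pd_torsion1[OF x] sum_conn1_pi[OF x] pd_pi_eq[OF x]
    using g_symmetric[OF x, of a b] by (simp add: algebra_simps)
qed

lemma sum_conn1_conn1:
  assumes x: "x \<in> U"
  shows "(\<Sum>p\<in>UNIV. conn1 g P p b c x * conn1 g P m a p x)
    = (\<Sum>p\<in>UNIV. christoffel g p b c x * christoffel g m a p x)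
      + kdelta m a * (\<Sum>p\<in>UNIV. christoffel g p b c x * pi_form g P p x)
      - P x $ m * (\<Sum>l\<in>UNIV. christoffel g l b c x * g x $ l $ a)
      + pi_form g P c x * conn1 g P m a b x
      - g x $ b $ c * ((\<Sum>q\<in>UNIV. christoffel g m a q x * P x $ q) - kdelta m a - P x $ m * pi_form g P a x)"
proof -
  have "(\<Sum>p\<in>UNIV. conn1 g P p b c x * conn1 g P m a p x)
     = (\<Sum>p\<in>UNIV. christoffel g p b c x * conn1 g P m a p x) + pi_form g P c x * conn1 g P m a b x
       - g x $ b $ c * (\<Sum>p\<in>UNIV. P x $ p * conn1 g P m a p x)"
    unfolding conn1_def[of g P _ b c x]
    by (simp add: algebra_simps sum.distrib sum_subtractf sum_distrib_left)
  moreover have "(\<Sum>p\<in>UNIV. christoffel g p b c x * conn1 g P m a p x)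
     = (\<Sum>p\<in>UNIV. christoffel g p b c x * christoffel g m a p x)
      + kdelta m a * (\<Sum>p\<in>UNIV. christoffel g p b c x * pi_form g P p x)
      - P x $ m * (\<Sum>l\<in>UNIV. christoffel g l b c x * g x $ l $ a)"
    unfolding conn1_def[of g P m a _ x] using g_symmetric[OF x, of a]
    by (simp add: algebra_simps sum.distrib sum_subtractf sum_distrib_left)
  moreover have "(\<Sum>p\<in>UNIV. P x $ p * conn1 g P m a p x)
     = (\<Sum>q\<in>UNIV. christoffel g m a q x * P x $ q) - kdelta m a - P x $ m * pi_form g P a x"
  proof -
    have "(\<Sum>p\<in>UNIV. P x $ p * conn1 g P m a p x)
       = (\<Sum>p\<in>UNIV. christoffel g m a p x * P x $ p) + kdelta m a * (\<Sum>p\<in>UNIV. pi_form g P p x * P x $ p)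
         - P x $ m * (\<Sum>p\<in>UNIV. g x $ a $ p * P x $ p)"
      unfolding conn1_def[of g P m a _ x]
      by (simp add: algebra_simps sum.distrib sum_subtractf sum_distrib_left)
    then show ?thesis
      using pi_P[OF x] by (simp add: pi_form_def)
  qed
  ultimately show ?thesis
    by simp
qed

lemma curv1_eq:
  assumes x: "x \<in> U"
  shows "curv1 g P a b c m x = curvg g a b c m x + g x $ a $ c * kdelta m b - g x $ b $ c * kdelta m a"
proof -
  have "(\<Sum>l\<in>UNIV. christoffel g l a b x * g x $ l $ c) = (\<Sum>l\<in>UNIV. christoffel g l b a x * g x $ l $ c)"
    using christoffel_symmetric[OF x] by simp
  then show ?thesis
    unfolding curv1_def curvg_def curv_def pd_conn1[OF x] sum_conn1_conn1[OF x] pd_pi_eq[OF x]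
      pd_g_christoffel[OF x] pd_P_eq[OF x]
    using christoffel_symmetric[OF x] g_symmetric[OF x, of a c] g_symmetric[OF x, of b c] g_symmetric[OF x, of a b]
    by (simp add: conn1_def algebra_simps)
qed

lemma curv4_eq:
  "x \<in> U \<Longrightarrow> curv4 g P a b c m x = curvg g a b c m x + g x $ a $ c * kdelta m b - g x $ b $ c * kdelta m a
     - pi_form g P b x * pi_form g P c x * kdelta m a + pi_form g P a x * pi_form g P c x * kdelta m b"
  unfolding curv4_def by (simp add: curv1_eq nabla1_torsion_eq_0 torsion1_torsion1)

lemma Ric4_eq:
  assumes x: "x \<in> U"
  shows "Ric4 g P b c x = Ricg g b c x - (real CARD('n) - 1) * (g x $ b $ c + pi_form g P b x * pi_form g P c x)"
  unfolding Ric4_def Ricg_def ricci_of_def curv4_eq[OF x]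
  by (simp add: sum.distrib sum_subtractf algebra_simps)

end

lemma (in metric_chart) trace_g: "x \<in> U \<Longrightarrow> (\<Sum>b\<in>UNIV. \<Sum>c\<in>UNIV. ginv g x $ b $ c * g x $ b $ c) = real CARD('n)"
  using ginv_g[of x] g_symmetric[of x] by (simp add: kdelta_def)

context unit_timelike_chart
begin

lemma trace_pi_pi:
  assumes x: "x \<in> U"
  shows "(\<Sum>b\<in>UNIV. \<Sum>c\<in>UNIV. ginv g x $ b $ c * (pi_form g P b x * pi_form g P c x)) = -1"
proof -
  have "(\<Sum>b\<in>UNIV. \<Sum>c\<in>UNIV. ginv g x $ b $ c * (pi_form g P b x * pi_form g P c x))
      = (\<Sum>b\<in>UNIV. pi_form g P b x * (\<Sum>c\<in>UNIV. ginv g x $ b $ c * pi_form g P c x))"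
    by (simp add: sum_distrib_left mult_ac)
  also have "\<dots> = -1"
    by (simp add: ginv_pi[OF x] pi_P[OF x])
  finally show ?thesis .
qed

lemma scalar_of_combination:
  assumes x: "x \<in> U" and S: "\<And>b c. S b c x = k * g x $ b $ c + k' * (pi_form g P b x * pi_form g P c x)"
  shows "scalar_of g S x = k * real CARD('n) - k'"
proof -
  have "scalar_of g S x = k * (\<Sum>b\<in>UNIV. \<Sum>c\<in>UNIV. ginv g x $ b $ c * g x $ b $ c)
     + k' * (\<Sum>b\<in>UNIV. \<Sum>c\<in>UNIV. ginv g x $ b $ c * (pi_form g P b x * pi_form g P c x))"
    unfolding scalar_of_def S by (simp add: algebra_simps sum.distrib sum_distrib_left)
  then show ?thesis
    by (simp add: trace_g[OF x] trace_pi_pi[OF x])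
qed

lemma contract_P_combination:
  assumes x: "x \<in> U"
  shows "(\<Sum>c\<in>UNIV. (k * g x $ b $ c + k' * (pi_form g P b x * pi_form g P c x)) * P x $ c)
    = (k - k') * pi_form g P b x"
proof -
  have "(\<Sum>c\<in>UNIV. (k * g x $ b $ c + k' * (pi_form g P b x * pi_form g P c x)) * P x $ c)
     = k * (\<Sum>c\<in>UNIV. g x $ b $ c * P x $ c) + k' * pi_form g P b x * (\<Sum>c\<in>UNIV. pi_form g P c x * P x $ c)"
    by (simp add: algebra_simps sum.distrib sum_distrib_left)
  also have "\<dots> = (k - k') * pi_form g P b x"
    unfolding pi_P[OF x] pi_form_def[of g P b x, symmetric] by (simp add: algebra_simps)
  finally show ?thesis .
qed

end

context concircular_chart
begin

lemma Ricg_P: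
  assumes x: "x \<in> U"
  shows "(\<Sum>c\<in>UNIV. Ricg g b c x * P x $ c) = (real CARD('n) - 1) * pi_form g P b x"
proof -
  have "(\<Sum>c\<in>UNIV. Ricg g b c x * P x $ c) = (\<Sum>a\<in>UNIV. \<Sum>c\<in>UNIV. curvg g a b c a x * P x $ c)"
    unfolding Ricg_def ricci_of_def by (subst sum.swap) (simp add: sum_distrib_right)
  also have "\<dots> = (\<Sum>a\<in>UNIV. pi_form g P b x - pi_form g P a x * kdelta a b)"
    by (simp add: curvg_P[OF x])
  finally show ?thesis
    by (simp add: sum_subtractf algebra_simps)
qed

lemma einstein_type_4_imp_Ricg:
  assumes "einstein_type_4 U g P" "x \<in> U"
  shows "Ricg g a b x = (real CARD('n) - 1) * (2 * g x $ a $ b + pi_form g P a x * pi_form g P b x)"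
proof -
  define n where "n = real CARD('n)"
  define \<kappa> where "\<kappa> = r4 g P x / n + (n - 1)"
  have Ricg: "Ricg g b c x = \<kappa> * g x $ b $ c + (n - 1) * (pi_form g P b x * pi_form g P c x)" for b c
    using assms Ric4_eq[OF assms(2), of b c] unfolding einstein_type_4_def \<kappa>_def n_def
    by (simp add: algebra_simps)
  obtain b where b: "pi_form g P b x \<noteq> 0"
    using pi_nonzero[OF assms(2)] by blast
  have "(n - 1) * pi_form g P b x = (\<kappa> - (n - 1)) * pi_form g P b x"
    using Ricg_P[OF assms(2), of b] contract_P_combination[OF assms(2), of \<kappa> b "n - 1"]
    unfolding Ricg n_def by auto
  then have "\<kappa> = 2 * (n - 1)"
    using b by simp
  then show ?thesis
    unfolding Ricg n_def[symmetric] by (simp only:) (simp add: algebra_simps)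
qed

lemma Ricg_imp_einstein_type_4:
  assumes Ricg: "\<forall>x\<in>U. \<forall>a b. Ricg g a b x
    = (real CARD('n) - 1) * (2 * g x $ a $ b + pi_form g P a x * pi_form g P b x)"
  shows "einstein_type_4 U g P"
  unfolding einstein_type_4_def
proof (intro ballI allI)
  fix x a b assume x: "x \<in> U"
  have Ric4: "Ric4 g P b c x = (real CARD('n) - 1) * g x $ b $ c + 0 * (pi_form g P b x * pi_form g P c x)" for b c
    using Ric4_eq[OF x, of b c] Ricg x by (simp add: algebra_simps)
  have "r4 g P x = (real CARD('n) - 1) * real CARD('n)"
    unfolding r4_def
    using scalar_of_combination[OF x, where S = "Ric4 g P" and k = "real CARD('n) - 1" and k' = 0, OF Ric4]
    by simp
  then show "Ric4 g P a b x = r4 g P x / real CARD('n) * g x $ a $ b"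
    using Ric4[of a b] by simp
qed

lemma rg_eq:
  assumes Ricg: "\<forall>x\<in>U. \<forall>a b. Ricg g a b x
    = (real CARD('n) - 1) * (2 * g x $ a $ b + pi_form g P a x * pi_form g P b x)"
    and x: "x \<in> U"
  shows "rg g x = (real CARD('n) - 1) * (2 * real CARD('n) - 1)"
proof -
  have "Ricg g b c x = (2 * (real CARD('n) - 1)) * g x $ b $ c
      + (real CARD('n) - 1) * (pi_form g P b x * pi_form g P c x)" for b c
    using Ricg x by (simp add: algebra_simps)
  from scalar_of_combination[OF x, where S = "Ricg g" and k = "2 * (real CARD('n) - 1)"
      and k' = "real CARD('n) - 1", OF this] show ?thesis
    unfolding rg_def by (simp add: algebra_simps)
qed

end

theorem mainTheorem13:
  fixes U :: "(real^'n::finite) set"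
    and g :: "real^'n \<Rightarrow> real^'n^'n"
    and P :: "real^'n \<Rightarrow> real^'n"
  assumes "CARD('n) \<ge> 3"
    and "lorentzian_metric U g"
    and "\<forall>k. smooth_on U (\<lambda>x. P x $ k)"
    and "concircular U g P"
    and "\<forall>x\<in>U. (\<Sum>i\<in>UNIV. \<Sum>j\<in>UNIV. g x $ i $ j * P x $ i * P x $ j) = -1"
  shows "(einstein_type_4 U g P \<longleftrightarrow>
           (perfect_fluid U g P \<and>
            (\<forall>x\<in>U. \<forall>a b. Ricg g a b x =
               (real CARD('n) - 1) * (2 * g x $ a $ b + pi_form g P a x * pi_form g P b x))))
       \<and> (einstein_type_4 U g P \<longrightarrow>
           (\<forall>x\<in>U. rg g x = (real CARD('n) - 1) * (2 * real CARD('n) - 1)))"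
proof -
  interpret metric_chart U g
    using assms(2) by (rule lorentzian_metric_chart)
  interpret concircular_chart U g P
    using assms(3-5) by unfold_locales auto
  let ?Ricg = "\<forall>x\<in>U. \<forall>a b. Ricg g a b x =
    (real CARD('n) - 1) * (2 * g x $ a $ b + pi_form g P a x * pi_form g P b x)"
  have "einstein_type_4 U g P \<longleftrightarrow> ?Ricg"
    using einstein_type_4_imp_Ricg Ricg_imp_einstein_type_4 by blast
  moreover have "?Ricg \<Longrightarrow> perfect_fluid U g P"
    unfolding perfect_fluid_def
    by (rule exI[of _ "\<lambda>x. 2 * (real CARD('n) - 1)"], rule exI[of _ "\<lambda>x. real CARD('n) - 1"])
      (simp add: algebra_simps)
  ultimately show ?thesis
    using rg_eq by blast
qed

end
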